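(* Let $D$ be an $n\times n$ distance matrix and let $q_0$ be the smallest $q\in\mathbb N$ such that $D^{(q)}=D$. Then there exists a graph realisation $(G=(V,E),\Phi)$ of $D$ with $$|V|\le n+\sum_{\substack{1\le i<j\le n\\ 2\le D_{ij}\le q_0}}(D_{ij}-1).$$
   Context: $[n]=\{1,\dots,n\}$. An $n\times n$ matrix $D$ with non-negative integer entries is a distance matrix if (i) $D_{ii}=0$ for all $i$ and $D_{ij}>0$ for all $i\ne j$; (ii) $D$ is symmetric; (iii) $D_{iw}+D_{wj}\ge D_{ij}$ for all $i,j,w\in[n]$. For $q\in\mathbb N$, the $q$-skeleton $G^q$ of $D$ is the edge-weighted graph with vertex set $[n]$ having an edge $\{i,j\}$ ($i<j$) if and only if $D_{ij}\le q$, this edge having weight (length) $D_{ij}$. $D^{(q)}$ denotes the $n\times n$ matrix whose $(i,j)$ entry is the weighted shortest-path distance between $i$ and $j$ in $G^q$ (equal to $\infty$ if no path exists). A graph realisation of $D$ is a pair $(G,\Phi)$, where $G=(V,E)$ is a finite simple undirected unweighted graph and $\Phi:[n]\to V$ is an injective map such that $d_G(\Phi(i),\Phi(j))=D_{ij}$ for all $i,j\in[n]$; here $d_G$ denotes the shortest-path distance in $G$ (equal to $\infty$ if no path exists). *)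

theory Defs
  imports Main "HOL-Library.Extended_Nat"
begin

text \<open>Matrices are functions nat \<Rightarrow> nat \<Rightarrow> nat, only the entries with indices in {1..n} matter.\<close>

definition is_dist_matrix :: "nat \<Rightarrow> (nat \<Rightarrow> nat \<Rightarrow> nat) \<Rightarrow> bool" where
  "is_dist_matrix n D \<longleftrightarrow>
     (\<forall>i\<in>{1..n}. D i i = 0) \<and>
     (\<forall>i\<in>{1..n}. \<forall>j\<in>{1..n}. i \<noteq> j \<longrightarrow> D i j > 0) \<and>
     (\<forall>i\<in>{1..n}. \<forall>j\<in>{1..n}. D i j = D j i) \<and>
     (\<forall>i\<in>{1..n}. \<forall>j\<in>{1..n}. \<forall>w\<in>{1..n}. D i w + D w j \<ge> D i j)"

text \<open>Walks in the q-skeleton G^q: vertex lists in [n] whose consecutive vertices are distinct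
  and joined by an edge, i.e. D entry at most q.\<close>
definition skel_walk :: "nat \<Rightarrow> (nat \<Rightarrow> nat \<Rightarrow> nat) \<Rightarrow> nat \<Rightarrow> nat list \<Rightarrow> bool" where
  "skel_walk n D q xs \<longleftrightarrow> xs \<noteq> [] \<and> set xs \<subseteq> {1..n} \<and>
     (\<forall>k < length xs - 1. xs ! k \<noteq> xs ! Suc k \<and> D (xs ! k) (xs ! Suc k) \<le> q)"

definition walk_weight :: "(nat \<Rightarrow> nat \<Rightarrow> nat) \<Rightarrow> nat list \<Rightarrow> nat" where
  "walk_weight D xs = (\<Sum>k < length xs - 1. D (xs ! k) (xs ! Suc k))"

text \<open>D^(q)_{ij}: weighted shortest path distance in G^q (\<infinity> if no path).\<close>
definition skel_dist :: "nat \<Rightarrow> (nat \<Rightarrow> nat \<Rightarrow> nat) \<Rightarrow> nat \<Rightarrow> nat \<Rightarrow> nat \<Rightarrow> enat" where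
  "skel_dist n D q i j = (INF xs \<in> {xs. skel_walk n D q xs \<and> hd xs = i \<and> last xs = j}.
       enat (walk_weight D xs))"

definition skel_eq :: "nat \<Rightarrow> (nat \<Rightarrow> nat \<Rightarrow> nat) \<Rightarrow> nat \<Rightarrow> bool" where
  "skel_eq n D q \<longleftrightarrow> (\<forall>i\<in>{1..n}. \<forall>j\<in>{1..n}. skel_dist n D q i j = enat (D i j))"

definition simple_graph :: "'v set \<Rightarrow> 'v set set \<Rightarrow> bool" where
  "simple_graph V E \<longleftrightarrow> finite V \<and> (\<forall>e\<in>E. \<exists>a b. a \<noteq> b \<and> a \<in> V \<and> b \<in> V \<and> e = {a, b})"

definition graph_walk :: "'v set \<Rightarrow> 'v set set \<Rightarrow> 'v list \<Rightarrow> bool" where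
  "graph_walk V E xs \<longleftrightarrow> xs \<noteq> [] \<and> set xs \<subseteq> V \<and>
     (\<forall>k < length xs - 1. {xs ! k, xs ! Suc k} \<in> E)"

definition graph_dist :: "'v set \<Rightarrow> 'v set set \<Rightarrow> 'v \<Rightarrow> 'v \<Rightarrow> enat" where
  "graph_dist V E u v = (INF xs \<in> {xs. graph_walk V E xs \<and> hd xs = u \<and> last xs = v}.
       enat (length xs - 1))"

definition graph_realisation :: "nat \<Rightarrow> (nat \<Rightarrow> nat \<Rightarrow> nat) \<Rightarrow> 'v set \<Rightarrow> 'v set set \<Rightarrow> (nat \<Rightarrow> 'v) \<Rightarrow> bool" where
  "graph_realisation n D V E \<Phi> \<longleftrightarrow> simple_graph V E \<and> inj_on \<Phi> {1..n} \<and> \<Phi> ` {1..n} \<subseteq> V \<and>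
     (\<forall>i\<in>{1..n}. \<forall>j\<in>{1..n}. graph_dist V E (\<Phi> i) (\<Phi> j) = enat (D i j))"

end

theory Submission
  imports Defs "HOL-Library.Nat_Bijection"
begin

text \<open>Subdivide every edge \<open>{i, j}\<close> of the \<open>q\<^sub>0\<close>-skeleton into a path of length \<open>D i j\<close>,
  which adds \<open>D i j - 1\<close> new vertices. Walks in the skeleton become walks of the same length,
  and \<open>D^(q\<^sub>0) = D\<close> gives \<open>d\<^sub>G(i, j) \<le> D i j\<close>. Conversely, for fixed \<open>j\<close> the potential
  \<open>v \<mapsto> min (t + D a j) (D a b - t + D b j)\<close>, where \<open>v\<close> is the \<open>t\<close>-th vertex on the path
  subdividing \<open>{a, b}\<close>, changes by at most one along every edge, equals \<open>D i j\<close> at \<open>i\<close> (by the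
  triangle inequality) and vanishes at \<open>j\<close>; hence \<open>d\<^sub>G(i, j) \<ge> D i j\<close>.\<close>

lemma graph_walk_singleton [simp]: "graph_walk V E [x] \<longleftrightarrow> x \<in> V"
  by (simp add: graph_walk_def)

lemma graph_walk_Cons_Cons:
  "graph_walk V E (x # y # ys) \<longleftrightarrow> x \<in> V \<and> {x, y} \<in> E \<and> graph_walk V E (y # ys)"
  by (auto simp: graph_walk_def less_Suc_eq_0_disj)

lemma skel_walk_singleton [simp]: "skel_walk n D q [x] \<longleftrightarrow> x \<in> {1..n}"
  by (simp add: skel_walk_def)

lemma skel_walk_Cons_Cons:
  "skel_walk n D q (x # y # ys) \<longleftrightarrow>
     x \<in> {1..n} \<and> x \<noteq> y \<and> D x y \<le> q \<and> skel_walk n D q (y # ys)"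
  by (auto simp: skel_walk_def less_Suc_eq_0_disj)

lemma walk_weight_singleton [simp]: "walk_weight D [x] = 0"
  by (simp add: walk_weight_def)

lemma walk_weight_Cons_Cons: "walk_weight D (x # y # ys) = D x y + walk_weight D (y # ys)"
  unfolding walk_weight_def by (simp add: sum.lessThan_Suc_shift del: sum.lessThan_Suc)

lemma enat_INF_eq_enatE:
  assumes "(INF x \<in> S. enat (f x)) = enat d"
  obtains x where "x \<in> S" "f x = d"
proof -
  have "S \<noteq> {}"
    using assms by (auto simp: top_enat_def)
  then obtain x where "x \<in> S"
    by blast
  then have "(INF x \<in> S. enat (f x)) \<in> (\<lambda>x. enat (f x)) ` S"
    by (intro wellorder_InfI[of "enat (f x)"]) auto
  then show ?thesis
    using assms that by auto
qed

definition walk_between :: "'v set \<Rightarrow> 'v set set \<Rightarrow> 'v \<Rightarrow> 'v \<Rightarrow> nat \<Rightarrow> bool" where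
  "walk_between V E x y L \<longleftrightarrow>
     (\<exists>xs. graph_walk V E xs \<and> hd xs = x \<and> last xs = y \<and> length xs - 1 = L)"

lemma walk_between_refl: "x \<in> V \<Longrightarrow> walk_between V E x x 0"
  unfolding walk_between_def by (intro exI[of _ "[x]"]) simp

lemma walk_between_Cons:
  assumes "x \<in> V" "{x, y} \<in> E" "walk_between V E y z L"
  shows "walk_between V E x z (Suc L)"
proof -
  obtain xs where xs: "graph_walk V E xs" "hd xs = y" "last xs = z" "length xs - 1 = L"
    using assms(3) unfolding walk_between_def by blast
  then obtain ys where "xs = y # ys"
    by (cases xs) (auto simp: graph_walk_def)
  with assms xs show ?thesis
    unfolding walk_between_def by (intro exI[of _ "x # xs"]) (auto simp: graph_walk_Cons_Cons)
qed

lemma walk_between_trans: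
  assumes "walk_between V E x y L1" "walk_between V E y z L2"
  shows "walk_between V E x z (L1 + L2)"
proof -
  have "walk_between V E (hd xs) z (length xs - 1 + L2)"
    if "graph_walk V E xs" "walk_between V E (last xs) z L2" for xs
    using that
  proof (induction xs rule: induct_list012)
    case (3 x y ys)
    then show ?case
      using walk_between_Cons[of x V y E z] by (auto simp: graph_walk_Cons_Cons)
  qed (auto simp: graph_walk_def)
  with assms show ?thesis
    unfolding walk_between_def[of V E x y] by fastforce
qed

lemma walk_between_sym:
  assumes "walk_between V E x y L"
  shows "walk_between V E y x L"
proof -
  have "walk_between V E (last xs) (hd xs) (length xs - 1)" if "graph_walk V E xs" for xs
    using that
  proof (induction xs rule: induct_list012)
    case (3 x y ys)
    have "walk_between V E (last (y # ys)) y (length ys)"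
      using 3 by (simp add: graph_walk_Cons_Cons)
    moreover have "walk_between V E y x 1"
    proof -
      have "x \<in> V" "y \<in> V" "{y, x} \<in> E"
        using "3.prems" by (auto simp: graph_walk_def insert_commute)
      then show ?thesis
        using walk_between_Cons[of y V x E x 0] walk_between_refl[of x V E] by simp
    qed
    ultimately show ?case
      using walk_between_trans by fastforce
  qed (auto simp: graph_walk_def walk_between_refl)
  with assms show ?thesis
    unfolding walk_between_def[of V E x y] by fastforce
qed

lemma graph_dist_le_walk_between: "walk_between V E x y L \<Longrightarrow> graph_dist V E x y \<le> enat L"
  unfolding walk_between_def graph_dist_def by (auto intro: INF_lower2)

lemma graph_dist_ge_potential:
  assumes "\<And>x y. {x, y} \<in> E \<Longrightarrow> h x \<le> h y + 1"
  shows "enat (h u - h v) \<le> graph_dist V E u v"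
proof -
  have "h (hd xs) \<le> h (last xs) + (length xs - 1)" if "graph_walk V E xs" for xs
    using that
  proof (induction xs rule: induct_list012)
    case (3 x y ys)
    then show ?case
      using assms[of x y] by (auto simp: graph_walk_Cons_Cons)
  qed (auto simp: graph_walk_def)
  then show ?thesis
    unfolding graph_dist_def by (force intro!: INF_greatest)
qed

lemma skel_walk_weight_ge:
  assumes dm: "is_dist_matrix n D"
  shows "skel_walk n D q xs \<Longrightarrow> D (hd xs) (last xs) \<le> walk_weight D xs"
proof (induction xs rule: induct_list012)
  case (2 x)
  then show ?case
    using dm by (simp add: is_dist_matrix_def)
next
  case (3 x y ys)
  have "set (x # y # ys) \<subseteq> {1..n}" "last (y # ys) \<in> set (y # ys)"
    using "3.prems" by (simp_all add: skel_walk_def)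
  then have "x \<in> {1..n}" "y \<in> {1..n}" "last (y # ys) \<in> {1..n}"
    by auto
  then have "D x (last (y # ys)) \<le> D x y + D y (last (y # ys))"
    using dm unfolding is_dist_matrix_def by blast
  with 3 show ?case
    by (simp add: skel_walk_Cons_Cons walk_weight_Cons_Cons)
qed (simp add: skel_walk_def)

lemma skel_eq_exists:
  assumes dm: "is_dist_matrix n D"
  shows "\<exists>q. skel_eq n D q"
proof -
  define q where "q = Max (case_prod D ` ({1..n} \<times> {1..n}))"
  have "skel_dist n D q i j = enat (D i j)" if ij: "i \<in> {1..n}" "j \<in> {1..n}" for i j
  proof (rule antisym)
    have "D i j \<le> q"
      unfolding q_def using ij by (intro Max_ge) auto
    then have "skel_walk n D q (if i = j then [i] else [i, j])"
      using ij by (simp add: skel_walk_Cons_Cons)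
    moreover have "walk_weight D (if i = j then [i] else [i, j]) = D i j"
      using dm ij by (simp add: walk_weight_Cons_Cons is_dist_matrix_def)
    ultimately show "skel_dist n D q i j \<le> enat (D i j)"
      unfolding skel_dist_def by (intro INF_lower2[of "if i = j then [i] else [i, j]"]) auto
    show "enat (D i j) \<le> skel_dist n D q i j"
      unfolding skel_dist_def using skel_walk_weight_ge[OF dm] by (auto intro!: INF_greatest)
  qed
  then show ?thesis
    unfolding skel_eq_def by blast
qed

lemma skel_eq_shortest_walk:
  assumes "skel_eq n D q" "i \<in> {1..n}" "j \<in> {1..n}"
  obtains xs where "skel_walk n D q xs" "hd xs = i" "last xs = j" "walk_weight D xs = D i j"
proof -
  have "skel_dist n D q i j = enat (D i j)"
    using assms unfolding skel_eq_def by blast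
  then show ?thesis
    unfolding skel_dist_def using that by (auto elim!: enat_INF_eq_enatE)
qed

definition skel_pairs :: "nat \<Rightarrow> (nat \<Rightarrow> nat \<Rightarrow> nat) \<Rightarrow> nat \<Rightarrow> (nat \<times> nat) set" where
  "skel_pairs n D q = {(a, b). 1 \<le> a \<and> a < b \<and> b \<le> n \<and> D a b \<le> q}"

text \<open>The vertices of the new graph are the numbers \<open>1..n\<close> together with codes \<open>> n\<close> for
  the interior vertices of the subdivided edges (decoded again by \<open>subdiv_potential\<close>); \<open>subdiv_vertex n D a b t\<close> is the vertex at
  distance \<open>t\<close> from \<open>a\<close> on the path of length \<open>D a b\<close> replacing the skeleton edge \<open>{a, b}\<close>.\<close>

definition subdiv_inner :: "nat \<Rightarrow> nat \<Rightarrow> nat \<Rightarrow> nat \<Rightarrow> nat" where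
  "subdiv_inner n a b t = n + 1 + prod_encode (prod_encode (a, b), t)"

definition subdiv_vertex :: "nat \<Rightarrow> (nat \<Rightarrow> nat \<Rightarrow> nat) \<Rightarrow> nat \<Rightarrow> nat \<Rightarrow> nat \<Rightarrow> nat" where
  "subdiv_vertex n D a b t = (if t = 0 then a else if t = D a b then b else subdiv_inner n a b t)"

definition subdiv_vertices :: "nat \<Rightarrow> (nat \<Rightarrow> nat \<Rightarrow> nat) \<Rightarrow> nat \<Rightarrow> nat set" where
  "subdiv_vertices n D q = {1..n} \<union> (\<Union>(a, b) \<in> skel_pairs n D q. subdiv_inner n a b ` {1..<D a b})"

definition subdiv_edges :: "nat \<Rightarrow> (nat \<Rightarrow> nat \<Rightarrow> nat) \<Rightarrow> nat \<Rightarrow> nat set set" where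
  "subdiv_edges n D q = {{subdiv_vertex n D a b t, subdiv_vertex n D a b (Suc t)} | a b t.
     (a, b) \<in> skel_pairs n D q \<and> t < D a b}"

definition subdiv_potential :: "nat \<Rightarrow> (nat \<Rightarrow> nat \<Rightarrow> nat) \<Rightarrow> nat \<Rightarrow> nat \<Rightarrow> nat" where
  "subdiv_potential n D j v = (if v \<le> n then D v j else
     (case prod_decode (v - n - 1) of (c, t) \<Rightarrow> case prod_decode c of (a, b) \<Rightarrow>
        min (t + D a j) (D a b - t + D b j)))"

lemma subdiv_edge_mem:
  "(a, b) \<in> skel_pairs n D q \<Longrightarrow> t < D a b \<Longrightarrow>
     {subdiv_vertex n D a b t, subdiv_vertex n D a b (Suc t)} \<in> subdiv_edges n D q"
  unfolding subdiv_edges_def by blast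

lemma subdiv_inner_neq: "x \<le> n \<Longrightarrow> subdiv_inner n a b t \<noteq> x"
  by (simp add: subdiv_inner_def)

lemma subdiv_inner_eq_iff: "subdiv_inner n a b t = subdiv_inner n a' b' t' \<longleftrightarrow> a = a' \<and> b = b' \<and> t = t'"
  by (auto simp: subdiv_inner_def dest: inj_onD[OF inj_prod_encode])

lemma subdiv_potential_inner:
  "subdiv_potential n D j (subdiv_inner n a b t) = min (t + D a j) (D a b - t + D b j)"
  by (simp add: subdiv_potential_def subdiv_inner_def)

lemma finite_skel_pairs: "finite (skel_pairs n D q)"
  by (rule finite_subset[of _ "{1..n} \<times> {1..n}"]) (auto simp: skel_pairs_def)

lemma card_subdiv_vertices:
  "card (subdiv_vertices n D q) =
     n + (\<Sum>(i, j) \<in> {(i, j). 1 \<le> i \<and> i < j \<and> j \<le> n \<and> 2 \<le> D i j \<and> D i j \<le> q}. D i j - 1)"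
proof -
  let ?inner = "\<Union>(a, b) \<in> skel_pairs n D q. subdiv_inner n a b ` {1..<D a b}"
  have "finite ?inner" "{1..n} \<inter> ?inner = {}"
    using finite_skel_pairs by (auto dest: subdiv_inner_neq)
  moreover have "card ?inner = (\<Sum>(a, b) \<in> skel_pairs n D q. D a b - 1)"
    by (subst card_UN_disjoint)
       (auto simp: finite_skel_pairs subdiv_inner_eq_iff card_image inj_on_def intro!: sum.cong)
  moreover have "(\<Sum>(a, b) \<in> skel_pairs n D q. D a b - 1) =
      (\<Sum>(i, j) \<in> {(i, j). 1 \<le> i \<and> i < j \<and> j \<le> n \<and> 2 \<le> D i j \<and> D i j \<le> q}. D i j - 1)"
    by (rule sum.mono_neutral_right) (use finite_skel_pairs[of n D q] in \<open>auto simp: skel_pairs_def\<close>)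
  ultimately show ?thesis
    unfolding subdiv_vertices_def by (simp add: card_Un_disjoint)
qed

context
  fixes n :: nat and D :: "nat \<Rightarrow> nat \<Rightarrow> nat" and q :: nat
  assumes dm: "is_dist_matrix n D"
begin

lemma skel_pairsD:
  assumes "(a, b) \<in> skel_pairs n D q"
  shows "a \<in> {1..n}" "b \<in> {1..n}" "a < b" "D a b \<le> q" "0 < D a b"
  using assms dm unfolding skel_pairs_def is_dist_matrix_def by auto

lemma subdiv_vertex_mem:
  assumes "(a, b) \<in> skel_pairs n D q" "t \<le> D a b"
  shows "subdiv_vertex n D a b t \<in> subdiv_vertices n D q"
  using assms skel_pairsD[OF assms(1)]
  by (force simp: subdiv_vertex_def subdiv_vertices_def)

lemma subdiv_vertex_Suc_neq:
  assumes "(a, b) \<in> skel_pairs n D q" "t < D a b"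
  shows "subdiv_vertex n D a b t \<noteq> subdiv_vertex n D a b (Suc t)"
  using assms skel_pairsD[OF assms(1)] subdiv_inner_neq[of _ n a b] subdiv_inner_neq[THEN not_sym, of _ n a b]
  by (auto simp: subdiv_vertex_def subdiv_inner_eq_iff)

lemma simple_graph_subdiv: "simple_graph (subdiv_vertices n D q) (subdiv_edges n D q)"
proof -
  have "\<exists>x y. x \<noteq> y \<and> x \<in> subdiv_vertices n D q \<and> y \<in> subdiv_vertices n D q \<and> e = {x, y}"
    if e: "e \<in> subdiv_edges n D q" for e
  proof -
    obtain a b t where "(a, b) \<in> skel_pairs n D q" "t < D a b"
      and "e = {subdiv_vertex n D a b t, subdiv_vertex n D a b (Suc t)}"
      using e unfolding subdiv_edges_def by blast
    then show ?thesis
      using subdiv_vertex_mem subdiv_vertex_Suc_neq by (intro exI conjI) auto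
  qed
  then show ?thesis
    unfolding simple_graph_def subdiv_vertices_def using finite_skel_pairs by auto
qed

lemma subdiv_potential_vertex:
  assumes ab: "(a, b) \<in> skel_pairs n D q" and t: "t \<le> D a b" and j: "j \<in> {1..n}"
  shows "subdiv_potential n D j (subdiv_vertex n D a b t) = min (t + D a j) (D a b - t + D b j)"
proof -
  have "D a j \<le> D a b + D b j" "D b j \<le> D b a + D a j" "D b a = D a b"
    using dm skel_pairsD[OF ab] j unfolding is_dist_matrix_def by blast+
  moreover have "a \<le> n" "b \<le> n"
    using skel_pairsD[OF ab] by auto
  ultimately show ?thesis
  proof (cases "t = 0 \<or> t = D a b")
    case False
    then show ?thesis
      by (simp add: subdiv_vertex_def subdiv_potential_inner)
  qed (auto simp: subdiv_vertex_def subdiv_potential_def)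
qed

lemma subdiv_potential_edge:
  assumes "{x, y} \<in> subdiv_edges n D q" "j \<in> {1..n}"
  shows "subdiv_potential n D j x \<le> subdiv_potential n D j y + 1"
proof -
  obtain a b t where ab: "(a, b) \<in> skel_pairs n D q" "t < D a b"
    and xy: "{x, y} = {subdiv_vertex n D a b t, subdiv_vertex n D a b (Suc t)}"
    using assms(1) unfolding subdiv_edges_def by blast
  show ?thesis
    using xy subdiv_potential_vertex[OF ab(1) _ assms(2), of t]
      subdiv_potential_vertex[OF ab(1) _ assms(2), of "Suc t"] ab(2)
    by (auto simp: doubleton_eq_iff)
qed

lemma graph_dist_subdiv_ge:
  assumes "i \<in> {1..n}" "j \<in> {1..n}"
  shows "enat (D i j) \<le> graph_dist (subdiv_vertices n D q) (subdiv_edges n D q) i j"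
proof -
  have "subdiv_potential n D j i = D i j" "subdiv_potential n D j j = 0"
    using assms dm by (auto simp: subdiv_potential_def is_dist_matrix_def)
  moreover have "enat (subdiv_potential n D j i - subdiv_potential n D j j)
      \<le> graph_dist (subdiv_vertices n D q) (subdiv_edges n D q) i j"
    by (rule graph_dist_ge_potential) (rule subdiv_potential_edge[OF _ assms(2)])
  ultimately show ?thesis
    by simp
qed

lemma walk_between_subdiv_path:
  assumes ab: "(a, b) \<in> skel_pairs n D q"
  shows "walk_between (subdiv_vertices n D q) (subdiv_edges n D q) a b (D a b)"
proof -
  have "walk_between (subdiv_vertices n D q) (subdiv_edges n D q)
          (subdiv_vertex n D a b (D a b - k)) b k" if "k \<le> D a b" for k
    using that
  proof (induction k)
    case 0
    then show ?case
      using subdiv_vertex_mem[OF ab, of "D a b"] skel_pairsD[OF ab]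
      by (simp add: subdiv_vertex_def walk_between_refl)
  next
    case (Suc k)
    have "Suc (D a b - Suc k) = D a b - k"
      using Suc.prems by simp
    then have "{subdiv_vertex n D a b (D a b - Suc k), subdiv_vertex n D a b (D a b - k)}
        \<in> subdiv_edges n D q"
      using subdiv_edge_mem[OF ab, of "D a b - Suc k"] Suc.prems by simp
    moreover have "subdiv_vertex n D a b (D a b - Suc k) \<in> subdiv_vertices n D q"
      by (rule subdiv_vertex_mem[OF ab]) simp
    ultimately show ?case
      using Suc walk_between_Cons by simp
  qed
  from this[of "D a b"] show ?thesis
    by (simp add: subdiv_vertex_def)
qed

lemma walk_between_skel_edge:
  assumes "a \<in> {1..n}" "b \<in> {1..n}" "a \<noteq> b" "D a b \<le> q"
  shows "walk_between (subdiv_vertices n D q) (subdiv_edges n D q) a b (D a b)"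
proof (cases "a < b")
  case True
  then show ?thesis
    using assms by (intro walk_between_subdiv_path) (simp add: skel_pairs_def)
next
  case False
  have "D b a = D a b"
    using dm assms unfolding is_dist_matrix_def by blast
  with False assms have "walk_between (subdiv_vertices n D q) (subdiv_edges n D q) b a (D a b)"
    using walk_between_subdiv_path[of b a] by (simp add: skel_pairs_def)
  then show ?thesis
    by (rule walk_between_sym)
qed

lemma walk_between_skel_walk:
  "skel_walk n D q xs \<Longrightarrow>
     walk_between (subdiv_vertices n D q) (subdiv_edges n D q) (hd xs) (last xs) (walk_weight D xs)"
proof (induction xs rule: induct_list012)
  case (2 x)
  then show ?case
    by (simp add: subdiv_vertices_def walk_between_refl)
next
  case (3 x y ys)
  have "y \<in> {1..n}"
    using "3.prems" by (simp add: skel_walk_def)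
  with "3.prems" have "walk_between (subdiv_vertices n D q) (subdiv_edges n D q) x y (D x y)"
    by (intro walk_between_skel_edge) (auto simp: skel_walk_Cons_Cons)
  with 3 show ?case
    using walk_between_trans by (fastforce simp: skel_walk_Cons_Cons walk_weight_Cons_Cons)
qed (simp add: skel_walk_def)

lemma graph_realisation_subdiv:
  assumes "skel_eq n D q"
  shows "graph_realisation n D (subdiv_vertices n D q) (subdiv_edges n D q) id"
proof -
  have "graph_dist (subdiv_vertices n D q) (subdiv_edges n D q) i j = enat (D i j)"
    if ij: "i \<in> {1..n}" "j \<in> {1..n}" for i j
  proof (rule antisym)
    obtain xs where "skel_walk n D q xs" "hd xs = i" "last xs = j" "walk_weight D xs = D i j"
      using skel_eq_shortest_walk[OF assms ij] .
    then show "graph_dist (subdiv_vertices n D q) (subdiv_edges n D q) i j \<le> enat (D i j)"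
      using graph_dist_le_walk_between walk_between_skel_walk by metis
  qed (rule graph_dist_subdiv_ge[OF ij])
  then show ?thesis
    unfolding graph_realisation_def using simple_graph_subdiv by (auto simp: subdiv_vertices_def)
qed

end

theorem mainTheorem8:
  fixes n :: nat and D :: "nat \<Rightarrow> nat \<Rightarrow> nat"
  assumes "is_dist_matrix n D"
  shows "\<exists>(V :: nat set) E \<Phi>. graph_realisation n D V E \<Phi> \<and>
    card V \<le> n + (\<Sum>(i, j) \<in> {(i, j). 1 \<le> i \<and> i < j \<and> j \<le> n \<and> 2 \<le> D i j \<and>
                                   D i j \<le> (LEAST q. skel_eq n D q)}. D i j - 1)"
proof -
  let ?q\<^sub>0 = "LEAST q. skel_eq n D q"
  have "skel_eq n D ?q\<^sub>0"
    using skel_eq_exists[OF assms] by (rule LeastI_ex)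
  then have "graph_realisation n D (subdiv_vertices n D ?q\<^sub>0) (subdiv_edges n D ?q\<^sub>0) id"
    using graph_realisation_subdiv[OF assms] by blast
  then show ?thesis
    using card_subdiv_vertices[of n D ?q\<^sub>0] by (intro exI[of _ "subdiv_vertices n D ?q\<^sub>0"]) auto
qed

end
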